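(* Let $v$ be a normalized, non-negative, submodular (not necessarily monotone) valuation, and run the deterministic mechanism BFM-VM described in the context with $\ell=2$ and $\alpha=1+\sqrt{3}$, with all sellers behaving truthfully. Then the output $S^*$ satisfies $$v(S^* )\ \ge\ \frac{v(O)}{12+4\sqrt{3}},$$ where $O$ is an optimal solution of $\max\{v(S): S\subseteq\mathcal{N},\ c(S)\le B\}$. Moreover, counting each evaluation of $v$ as one step, BFM-VM runs in $\mathcal{O}(n\log n)$ time.
   Context: Setting. $\mathcal{N}$ is a finite set of $n$ sellers. The valuation $v:2^{\mathcal{N}}\to\mathbb{R}_{\ge 0}$ satisfies $v(\emptyset)=0$ and is submodular (for $X\subseteq Y\subseteq\mathcal{N}$ and $u\notin Y$, $v(u\mid Y)\le v(u\mid X)$), where $v(S\mid T)=v(S\cup T)-v(T)$, $v(u\mid T)=v(\{u\}\mid T)$, $v(u)=v(\{u\})$. Each seller $u$ has a private cost $c(u)\ge 0$; $c(X)=\sum_{u\in X}c(u)$. $B>0$ is the budget, $[\ell]=\{1,\dots,\ell\}$. Sellers behave truthfully: a seller $u$ offered price $q$ accepts iff $c(u)\le q$. Mechanism BFM-VM (inputs $B$, $\alpha>1$, $\ell\in\{1,2\}$): 1. Offer every seller the price $B$; let $R$ be the set of sellers who accept, and set $p(u)=B$ for $u\in R$. 2. Set $t=1$, $\rho_1=\max_{u\in R}v(u)$, $S_{1,1}=\{u_0\}$ for some $u_0\in\arg\max_{u\in R}v(u)$, and (if $\ell=2$) $S_{2,1}=\emptyset$. 3. Repeat rounds: set $t\leftarrow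 t+1$, $\rho_t=\alpha\rho_{t-1}$, $S_{i,t}=\emptyset$ for $i\in[\ell]$. Process the sellers $u\in R\setminus\bigcup_{i=1}^{\ell}S_{i,t-1}$ one at a time in a fixed order. For each such $u$: pick $j\in\arg\max_{i\in[\ell]}v(u\mid S_{i,t})$ (current contents); update $p(u)\leftarrow\min\{p(u),\ v(u\mid S_{j,t})/(\rho_t/B)\}$ and offer $p(u)$ to $u$. If $u$ accepts: if $v(S_{j,t}\cup\{u\})>\rho_t$, end the round immediately; otherwise add $u$ to $S_{j,t}$. If $u$ rejects, remove $u$ from $R$. After the round, stop if $R\setminus\bigcup_{i=1}^{\ell}(S_{i,t-1}\cup S_{i,t})=\emptyset$; otherwise start another round. 4. Let $M$ be the final value of $t$. Output $S^*\in\arg\max_{A\in\{S_{i,t}: i\in[\ell],\ t\in\{M-1,M\}\}}v(A)$, paying each $u\in S^*$ its current price $p(u)$. *)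

theory Defs
  imports Complex_Main
begin

text \<open>State of mechanism BFM-VM with ell = 2.
  Rs: current set R; pr: current prices; A1, A2: the sets S_{1,t}, S_{2,t} of the
  current round t; P1, P2: the sets S_{1,t-1}, S_{2,t-1}; rho: rho_t; tt: t;
  ended: whether the current round has ended early; evals: number of evaluations
  of v performed so far.\<close>

record 'a bfm_state =
  Rs :: "'a set"
  pr :: "'a \<Rightarrow> real"
  A1 :: "'a set"
  A2 :: "'a set"
  P1 :: "'a set"
  P2 :: "'a set"
  rho :: real
  tt :: nat
  ended :: bool
  evals :: nat

text \<open>The index j is an arg max of
  v(u | S_{i,t}); ties are broken by the arbitrary rule tie (True means pick 1).
  Computing the two marginals costs 4 evaluations of v (v(S_j + u) is then known).\<close>

definition bfm_proc ::
  "('a set \<Rightarrow> real) \<Rightarrow> ('a \<Rightarrow> real) \<Rightarrow> real \<Rightarrow> (nat \<Rightarrow> 'a \<Rightarrow> bool)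
   \<Rightarrow> 'a \<Rightarrow> 'a bfm_state \<Rightarrow> 'a bfm_state" where
  "bfm_proc v c B tie u s =
    (if ended s \<or> u \<notin> Rs s \<or> u \<in> P1 s \<or> u \<in> P2 s then s else
     (let m1 = v (insert u (A1 s)) - v (A1 s);
          m2 = v (insert u (A2 s)) - v (A2 s);
          j1 = (m2 < m1 \<or> (m1 = m2 \<and> tie (tt s) u));
          Sj = (if j1 then A1 s else A2 s);
          mj = (if j1 then m1 else m2);
          q = min (pr s u) (mj / (rho s / B));
          s' = s\<lparr>pr := (pr s)(u := q), evals := evals s + 4\<rparr>
      in if c u \<le> q then
           (if rho s < v (insert u Sj) then s'\<lparr>ended := True\<rparr>
            else if j1 then s'\<lparr>A1 := insert u (A1 s)\<rparr>
            else s'\<lparr>A2 := insert u (A2 s)\<rparr>)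
         else s'\<lparr>Rs := Rs s - {u}\<rparr>))"

definition bfm_start :: "real \<Rightarrow> 'a bfm_state \<Rightarrow> 'a bfm_state" where
  "bfm_start alpha s = s\<lparr>P1 := A1 s, P2 := A2 s, A1 := {}, A2 := {},
      rho := alpha * rho s, tt := tt s + 1, ended := False\<rparr>"

definition bfm_round ::
  "'a list \<Rightarrow> ('a set \<Rightarrow> real) \<Rightarrow> ('a \<Rightarrow> real) \<Rightarrow> real \<Rightarrow> real \<Rightarrow> (nat \<Rightarrow> 'a \<Rightarrow> bool)
   \<Rightarrow> 'a bfm_state \<Rightarrow> 'a bfm_state" where
  "bfm_round ord v c B alpha tie s = fold (bfm_proc v c B tie) ord (bfm_start alpha s)"

definition bfm_done :: "'a bfm_state \<Rightarrow> bool" where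
  "bfm_done s \<longleftrightarrow> Rs s - (P1 s \<union> P2 s \<union> A1 s \<union> A2 s) = {}"

text \<open>Step 1: R = sellers accepting price B; the n offers use n evaluations v(u)
  (one per seller).  u0 is the chosen maximiser of v({u}) over R.\<close>

definition bfm_R0 :: "'a list \<Rightarrow> ('a \<Rightarrow> real) \<Rightarrow> real \<Rightarrow> 'a set" where
  "bfm_R0 ord c B = {u \<in> set ord. c u \<le> B}"

definition bfm_init ::
  "'a list \<Rightarrow> ('a set \<Rightarrow> real) \<Rightarrow> ('a \<Rightarrow> real) \<Rightarrow> real \<Rightarrow> 'a \<Rightarrow> 'a bfm_state" where
  "bfm_init ord v c B u0 =
    \<lparr>Rs = bfm_R0 ord c B, pr = (\<lambda>_. B), A1 = {u0}, A2 = {}, P1 = {}, P2 = {},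
     rho = v {u0}, tt = 1, ended = False, evals = length ord\<rparr>"

text \<open>State after the round with index k+1 (k = 0: the initial state, t = 1).\<close>

definition bfm_state_at ::
  "'a list \<Rightarrow> ('a set \<Rightarrow> real) \<Rightarrow> ('a \<Rightarrow> real) \<Rightarrow> real \<Rightarrow> real \<Rightarrow> (nat \<Rightarrow> 'a \<Rightarrow> bool)
   \<Rightarrow> 'a \<Rightarrow> nat \<Rightarrow> 'a bfm_state" where
  "bfm_state_at ord v c B alpha tie u0 k =
     (bfm_round ord v c B alpha tie ^^ k) (bfm_init ord v c B u0)"

text \<open>The mechanism terminates: some round t = k+1 >= 2 passes the stopping test.
  (If R is empty there is nothing to run.)\<close>

definition bfm_terminates ::
  "'a list \<Rightarrow> ('a set \<Rightarrow> real) \<Rightarrow> ('a \<Rightarrow> real) \<Rightarrow> real \<Rightarrow> real \<Rightarrow> (nat \<Rightarrow> 'a \<Rightarrow> bool)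
   \<Rightarrow> 'a \<Rightarrow> bool" where
  "bfm_terminates ord v c B alpha tie u0 \<longleftrightarrow>
     bfm_R0 ord c B = {} \<or> (\<exists>k\<ge>1. bfm_done (bfm_state_at ord v c B alpha tie u0 k))"

definition bfm_final ::
  "'a list \<Rightarrow> ('a set \<Rightarrow> real) \<Rightarrow> ('a \<Rightarrow> real) \<Rightarrow> real \<Rightarrow> real \<Rightarrow> (nat \<Rightarrow> 'a \<Rightarrow> bool)
   \<Rightarrow> 'a \<Rightarrow> 'a bfm_state" where
  "bfm_final ord v c B alpha tie u0 =
     bfm_state_at ord v c B alpha tie u0
       (LEAST k. 1 \<le> k \<and> bfm_done (bfm_state_at ord v c B alpha tie u0 k))"

text \<open>Candidate output sets {S_{i,t} : i in {1,2}, t in {M-1, M}}; S* is any of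
  maximal value.  If R is empty, the output is the empty set.\<close>

definition bfm_candidates ::
  "'a list \<Rightarrow> ('a set \<Rightarrow> real) \<Rightarrow> ('a \<Rightarrow> real) \<Rightarrow> real \<Rightarrow> real \<Rightarrow> (nat \<Rightarrow> 'a \<Rightarrow> bool)
   \<Rightarrow> 'a \<Rightarrow> 'a set set" where
  "bfm_candidates ord v c B alpha tie u0 =
     (if bfm_R0 ord c B = {} then {{}} else
      (let s = bfm_final ord v c B alpha tie u0 in {P1 s, P2 s, A1 s, A2 s}))"

text \<open>Total number of evaluations of v (including 4 for selecting S* at the end).\<close>

definition bfm_num_evals ::
  "'a list \<Rightarrow> ('a set \<Rightarrow> real) \<Rightarrow> ('a \<Rightarrow> real) \<Rightarrow> real \<Rightarrow> real \<Rightarrow> (nat \<Rightarrow> 'a \<Rightarrow> bool)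
   \<Rightarrow> 'a \<Rightarrow> nat" where
  "bfm_num_evals ord v c B alpha tie u0 =
     (if bfm_R0 ord c B = {} then length ord
      else evals (bfm_final ord v c B alpha tie u0) + 4)"

definition bfm_instance ::
  "'a list \<Rightarrow> ('a set \<Rightarrow> real) \<Rightarrow> ('a \<Rightarrow> real) \<Rightarrow> real \<Rightarrow> 'a \<Rightarrow> bool" where
  "bfm_instance ord v c B u0 \<longleftrightarrow>
     distinct ord \<and> v {} = 0 \<and> (\<forall>S \<subseteq> set ord. 0 \<le> v S) \<and>
     (\<forall>X Y u. X \<subseteq> Y \<longrightarrow> Y \<subseteq> set ord \<longrightarrow> u \<in> set ord - Y \<longrightarrow>
         v (insert u Y) - v Y \<le> v (insert u X) - v X) \<and>
     (\<forall>u \<in> set ord. 0 \<le> c u) \<and> 0 < B \<and>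
     (bfm_R0 ord c B \<noteq> {} \<longrightarrow>
        u0 \<in> bfm_R0 ord c B \<and> (\<forall>u \<in> bfm_R0 ord c B. v {u} \<le> v {u0}))"

end

theory Submission
  imports Defs
begin

text \<open>In every round the two sets \<open>S\<^sub>1, S\<^sub>2\<close> stay below \<open>\<rho>\<^sub>t\<close>, and a seller rejected in
  round \<open>t\<close> has marginal value below \<open>\<rho>\<^sub>t c(u)/B\<close> with respect to both of them.  Since an
  accepted seller joins the set on which its gain is larger, the positive gains of \<open>S\<^sub>2\<close>
  with respect to \<open>S\<^sub>1\<close> add up to at most \<open>v(S\<^sub>2)\<close> and vice versa, so submodularity bounds
  any \<open>Q\<close> inside the sets and the rejections of a round by
  \<open>2 (v(S\<^sub>1) + v(S\<^sub>2)) + 2 \<rho>\<^sub>t c(Q)/B\<close>.  Splitting a feasible \<open>O\<close> according to the round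
  that rejected its sellers, the cost terms add up to at most \<open>2 \<rho>\<^sub>M\<close>, the early rounds
  contribute a geometric series in \<open>\<rho>\<close>, and the penultimate round, which ended early,
  gives \<open>\<rho>\<^sub>M\<^sub>-\<^sub>1 < v(u\<^sub>0) + v(S*)\<close>; balancing these terms with \<open>\<alpha> = 1 + \<surd>3\<close> yields the
  factor \<open>12 + 4\<surd>3\<close>.  As \<open>\<rho>\<^sub>t = \<alpha>\<^sup>t\<^sup>-\<^sup>1 v(u\<^sub>0)\<close> and no set of at most \<open>n\<close> sellers is worth more
  than \<open>n v(u\<^sub>0)\<close>, there are at most \<open>log\<^sub>2 n + 1\<close> rounds of \<open>O(n)\<close> evaluations each.\<close>

text \<open>The only place where the choice \<open>\<alpha> = 1 + \<surd>3\<close> enters.\<close>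

lemma sqrt3_tradeoff:
  fixes S r \<rho> X :: real
  assumes "sqrt 3 * S \<le> r" "(1 + sqrt 3) * \<rho> \<le> r" "r < \<rho> + X" "0 \<le> X"
  shows "8 * X + 2 * S + 2 * ((1 + sqrt 3) * r) \<le> (12 + 4 * sqrt 3) * X"
proof -
  define s where "s = sqrt (3::real)"
  have s: "s * s = 3" "1 \<le> s" unfolding s_def by auto
  have "(1 + s) * r < (1 + s) * (\<rho> + X)" using assms(3) s(2) by (intro mult_strict_left_mono) auto
  then have sr: "s * r \<le> (1 + s) * X" using assms(2) unfolding s_def by (simp add: algebra_simps)
  have "s * (s * S) \<le> s * r" using assms(1) s(2) unfolding s_def by (intro mult_left_mono) auto
  then have S3: "3 * S \<le> s * r" using s(1) by (simp add: mult.assoc[symmetric])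
  have "s * (s * r) \<le> s * ((1 + s) * X)" using sr s(2) by (intro mult_left_mono) auto
  then have r3: "3 * r \<le> s * X + 3 * X" using s(1) by (simp add: algebra_simps mult.assoc[symmetric])
  have "X \<le> s * X" using mult_right_mono[OF s(2) assms(4)] by simp
  then show ?thesis using S3 r3 sr unfolding s_def[symmetric] by (simp add: algebra_simps)
qed

section \<open>Submodular valuations\<close>

abbreviation marginal :: "('a set \<Rightarrow> real) \<Rightarrow> 'a \<Rightarrow> 'a set \<Rightarrow> real" where
  "marginal v u S \<equiv> v (insert u S) - v S"

locale submodular_valuation =
  fixes N :: "'a set" and v :: "'a set \<Rightarrow> real"
  assumes finite_ground: "finite N"
    and empty: "v {} = 0"
    and nonneg: "S \<subseteq> N \<Longrightarrow> 0 \<le> v S"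
    and marginal_antimono:
      "X \<subseteq> Y \<Longrightarrow> Y \<subseteq> N \<Longrightarrow> u \<in> N \<Longrightarrow> u \<notin> Y \<Longrightarrow> marginal v u Y \<le> marginal v u X"
begin

lemma le_add_sum_marginals:
  assumes "A \<union> T \<subseteq> N" "A \<inter> T = {}"
  shows "v (A \<union> T) \<le> v A + (\<Sum>u\<in>T. marginal v u A)"
proof -
  have "finite T" using assms(1) finite_ground finite_subset by blast
  then show ?thesis using assms
  proof (induction T rule: finite_induct)
    case (insert x T)
    have "marginal v x (A \<union> T) \<le> marginal v x A"
      using insert by (intro marginal_antimono) auto
    then show ?case using insert by auto
  qed simp
qed

lemma set_marginal_antimono:
  assumes "Z \<subseteq> X" "X \<union> D \<subseteq> N" "D \<inter> X = {}"
  shows "v (X \<union> D) - v X \<le> v (Z \<union> D) - v Z"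
proof -
  have "finite D" using assms(2) finite_ground finite_subset by blast
  then show ?thesis using assms
  proof (induction D rule: finite_induct)
    case (insert d D)
    have "marginal v d (X \<union> D) \<le> marginal v d (Z \<union> D)"
      using insert by (intro marginal_antimono) auto
    then show ?case using insert by auto
  qed simp
qed

lemma union_inter_le:
  assumes "X \<subseteq> N" "Y \<subseteq> N"
  shows "v (X \<union> Y) + v (X \<inter> Y) \<le> v X + v Y"
proof -
  have "v (X \<union> (Y - X)) - v X \<le> v ((X \<inter> Y) \<union> (Y - X)) - v (X \<inter> Y)"
    using assms by (intro set_marginal_antimono) auto
  moreover have "X \<union> (Y - X) = X \<union> Y" "(X \<inter> Y) \<union> (Y - X) = Y" by auto
  ultimately show ?thesis by simp
qed

lemma subadditive:
  assumes "X \<subseteq> N" "Y \<subseteq> N"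
  shows "v (X \<union> Y) \<le> v X + v Y"
proof -
  have "0 \<le> v (X \<inter> Y)" using assms by (intro nonneg) auto
  then show ?thesis using union_inter_le[OF assms] by linarith
qed

lemma subadditive_UN:
  assumes "finite I" "\<And>i. i \<in> I \<Longrightarrow> F i \<subseteq> N"
  shows "v (\<Union>i\<in>I. F i) \<le> (\<Sum>i\<in>I. v (F i))"
  using assms
proof (induction I rule: finite_induct)
  case (insert x I)
  have "v (F x \<union> (\<Union>i\<in>I. F i)) \<le> v (F x) + v (\<Union>i\<in>I. F i)"
    using insert by (intro subadditive) auto
  then show ?case using insert by auto
qed (simp add: empty)

lemma le_sum_singletons:
  assumes "T \<subseteq> N"
  shows "v T \<le> (\<Sum>u\<in>T. v {u})"
  using subadditive_UN[of T "\<lambda>u. {u}"] assms finite_ground finite_subset by auto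

lemma le_union_disjoint_pair:
  assumes "Q \<union> S \<union> T \<subseteq> N" "S \<inter> T = {}"
  shows "v Q \<le> v (Q \<union> S) + v (Q \<union> T)"
proof -
  have "(Q \<union> S) \<inter> (Q \<union> T) = Q" using assms(2) by auto
  moreover have "0 \<le> v ((Q \<union> S) \<union> (Q \<union> T))" using assms(1) by (intro nonneg) auto
  ultimately show ?thesis using union_inter_le[of "Q \<union> S" "Q \<union> T"] assms(1) by auto
qed

lemma value_union_le:
  assumes "S \<union> T \<union> D \<subseteq> N" "S \<inter> T = {}" "S \<inter> D = {}" "T \<inter> D = {}" "Q \<subseteq> S \<union> T \<union> D"
    and D: "\<And>w. w \<in> D \<Longrightarrow> marginal v w S \<le> b w"
  shows "v (Q \<union> S) \<le> v S + (\<Sum>w\<in>Q \<inter> T. max 0 (marginal v w S)) + (\<Sum>w\<in>Q \<inter> D. b w)"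
proof -
  have "Q \<subseteq> N" using assms(1,5) by blast
  then have "finite Q" using finite_ground finite_subset by blast
  moreover have split: "Q - S = (Q \<inter> T) \<union> (Q \<inter> D)" "(Q \<inter> T) \<inter> (Q \<inter> D) = {}"
    using assms(2-5) by auto
  ultimately have sum_split: "(\<Sum>w\<in>Q - S. marginal v w S)
      = (\<Sum>w\<in>Q \<inter> T. marginal v w S) + (\<Sum>w\<in>Q \<inter> D. marginal v w S)"
    unfolding split(1) by (intro sum.union_disjoint) auto
  have "(\<Sum>w\<in>Q \<inter> T. marginal v w S) \<le> (\<Sum>w\<in>Q \<inter> T. max 0 (marginal v w S))"
    by (rule sum_mono) simp
  moreover have "(\<Sum>w\<in>Q \<inter> D. marginal v w S) \<le> (\<Sum>w\<in>Q \<inter> D. b w)"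
    using D by (intro sum_mono) auto
  moreover have "v (S \<union> (Q - S)) \<le> v S + (\<Sum>w\<in>Q - S. marginal v w S)"
    using assms(1,5) by (intro le_add_sum_marginals) auto
  then have "v (Q \<union> S) \<le> v S + (\<Sum>w\<in>Q - S. marginal v w S)" by (simp add: Un_commute)
  ultimately show ?thesis unfolding sum_split by linarith
qed

text \<open>If every element of \<open>T\<close> gained at least as much on \<open>T\<close> as on \<open>S\<close> when it was added,
  its positive gains with respect to \<open>S\<close> telescope to at most \<open>v T\<close>.\<close>

lemma balanced_insert:
  assumes "S \<union> T \<subseteq> N" "u \<in> N" "u \<notin> S \<union> T" "S \<inter> T = {}"
    and ST: "(\<Sum>w\<in>T. max 0 (marginal v w S)) \<le> v T"
    and TS: "(\<Sum>w\<in>S. max 0 (marginal v w T)) \<le> v S"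
    and larger: "marginal v u T \<le> marginal v u S" and gain: "0 \<le> marginal v u S"
  shows "(\<Sum>w\<in>T. max 0 (marginal v w (insert u S))) \<le> v T"
    and "(\<Sum>w\<in>insert u S. max 0 (marginal v w T)) \<le> v (insert u S)"
proof -
  have "(\<Sum>w\<in>T. max 0 (marginal v w (insert u S))) \<le> (\<Sum>w\<in>T. max 0 (marginal v w S))"
  proof (rule sum_mono)
    fix w assume "w \<in> T"
    then have "marginal v w (insert u S) \<le> marginal v w S"
      using assms(1-4) by (intro marginal_antimono) auto
    then show "max 0 (marginal v w (insert u S)) \<le> max 0 (marginal v w S)" by simp
  qed
  then show "(\<Sum>w\<in>T. max 0 (marginal v w (insert u S))) \<le> v T" using ST by linarith
  have "finite S" using assms(1) finite_ground finite_subset by blast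
  then have "(\<Sum>w\<in>insert u S. max 0 (marginal v w T))
      = max 0 (marginal v u T) + (\<Sum>w\<in>S. max 0 (marginal v w T))"
    using assms(3) by simp
  moreover have "max 0 (marginal v u T) \<le> marginal v u S" using larger gain by simp
  ultimately show "(\<Sum>w\<in>insert u S. max 0 (marginal v w T)) \<le> v (insert u S)"
    using TS by linarith
qed

end

section \<open>One round of BFM-VM\<close>

lemma accepted_price_gain_nonneg:
  fixes B \<rho> c p m :: real
  assumes "0 < B" "0 < \<rho>" "0 \<le> c" "c \<le> min p (m / (\<rho> / B))"
  shows "0 \<le> m"
proof -
  have "0 \<le> m / (\<rho> / B)" using assms(3,4) by linarith
  then show ?thesis using assms(1,2) by (simp add: zero_le_divide_iff zero_le_mult_iff)
qed

lemma rejected_price_gain_less: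
  fixes B \<rho> c p m :: real
  assumes "0 < B" "0 < \<rho>" "c \<le> p" "\<not> c \<le> min p (m / (\<rho> / B))"
  shows "m < \<rho> * c / B"
proof -
  have "m / (\<rho> / B) < c" using assms(3,4) by linarith
  then show ?thesis using assms(1,2) by (simp add: divide_less_eq less_divide_eq mult.commute)
qed

locale bfm_run =
  fixes ord :: "'a list" and v :: "'a set \<Rightarrow> real" and c :: "'a \<Rightarrow> real" and B :: real
    and tie :: "nat \<Rightarrow> 'a \<Rightarrow> bool" and u0 :: 'a and al :: real
  assumes valid_instance: "bfm_instance ord v c B u0" and alpha_gt_1: "1 < al"
begin

abbreviation "N \<equiv> set ord"
abbreviation "proc \<equiv> bfm_proc v c B tie"

lemma distinct_ord: "distinct ord"
  and cost_nonneg: "u \<in> N \<Longrightarrow> 0 \<le> c u"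
  and budget_pos: "0 < B"
  using valid_instance unfolding bfm_instance_def by blast+

sublocale submodular_valuation N v
  using valid_instance unfolding bfm_instance_def by unfold_locales auto

lemma bfm_proc_cases [consumes 6]:
  assumes active: "\<not> ended s" "u \<in> Rs s" "u \<notin> P1 s" "u \<notin> P2 s"
    and u: "u \<in> N" "c u \<le> pr s u"
  obtains
    (stop) q where "proc u s = s\<lparr>pr := (pr s)(u := q), evals := evals s + 4, ended := True\<rparr>"
      "c u \<le> q" "rho s < v (insert u (A1 s)) \<or> rho s < v (insert u (A2 s))"
  | (add1) q where "proc u s = s\<lparr>pr := (pr s)(u := q), evals := evals s + 4, A1 := insert u (A1 s)\<rparr>"
      "c u \<le> q" "v (insert u (A1 s)) \<le> rho s" "marginal v u (A2 s) \<le> marginal v u (A1 s)"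
      "0 < rho s \<Longrightarrow> 0 \<le> marginal v u (A1 s)"
  | (add2) q where "proc u s = s\<lparr>pr := (pr s)(u := q), evals := evals s + 4, A2 := insert u (A2 s)\<rparr>"
      "c u \<le> q" "v (insert u (A2 s)) \<le> rho s" "marginal v u (A1 s) \<le> marginal v u (A2 s)"
      "0 < rho s \<Longrightarrow> 0 \<le> marginal v u (A2 s)"
  | (reject) q where "proc u s = s\<lparr>pr := (pr s)(u := q), evals := evals s + 4, Rs := Rs s - {u}\<rparr>"
      "0 < rho s \<Longrightarrow> marginal v u (A1 s) < rho s * c u / B"
      "0 < rho s \<Longrightarrow> marginal v u (A2 s) < rho s * c u / B"
proof -
  define m1 where "m1 = marginal v u (A1 s)"
  define m2 where "m2 = marginal v u (A2 s)"
  define j1 where "j1 = (m2 < m1 \<or> (m1 = m2 \<and> tie (tt s) u))"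
  define mj where "mj = (if j1 then m1 else m2)"
  define q where "q = min (pr s u) (mj / (rho s / B))"
  let ?s' = "s\<lparr>pr := (pr s)(u := q), evals := evals s + 4\<rparr>"
  have proc_eq: "proc u s = (if c u \<le> q then
        (if rho s < v (insert u (if j1 then A1 s else A2 s)) then ?s'\<lparr>ended := True\<rparr>
         else if j1 then ?s'\<lparr>A1 := insert u (A1 s)\<rparr> else ?s'\<lparr>A2 := insert u (A2 s)\<rparr>)
      else ?s'\<lparr>Rs := Rs s - {u}\<rparr>)"
    using active unfolding bfm_proc_def Let_def q_def mj_def j1_def m1_def m2_def by simp
  have mj_max: "m1 \<le> mj" "m2 \<le> mj" by (auto simp: mj_def j1_def)
  show thesis
  proof (cases "c u \<le> q")
    case accept: True
    have mj_nonneg: "0 \<le> mj" if "0 < rho s"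
      using accept unfolding q_def
      by (rule accepted_price_gain_nonneg[OF budget_pos that cost_nonneg[OF u(1)]])
    show thesis
    proof (cases "rho s < v (insert u (if j1 then A1 s else A2 s))")
      case True
      then show thesis using stop[of q] proc_eq accept by (auto split: if_splits)
    next
      case False
      show thesis
      proof (cases j1)
        case True
        then show thesis using add1[of q] proc_eq accept False mj_max mj_nonneg
          by (simp add: m1_def m2_def mj_def)
      next
        case False
        then have "m1 \<le> m2" by (auto simp: j1_def)
        then show thesis using add2[of q] proc_eq accept \<open>\<not> rho s < _\<close> False mj_nonneg
          by (simp add: m1_def m2_def mj_def)
      qed
    qed
  next
    case False
    have mj_less: "mj < rho s * c u / B" if "0 < rho s"
      using False unfolding q_def by (rule rejected_price_gain_less[OF budget_pos that u(2)])
    show thesis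
    proof (rule reject[of q])
      show "proc u s = s\<lparr>pr := (pr s)(u := q), evals := evals s + 4, Rs := Rs s - {u}\<rparr>"
        using proc_eq False by simp
    qed (use mj_less mj_max in \<open>force simp: m1_def m2_def\<close>)+
  qed
qed

text \<open>\<open>round_inv R e X s\<close>: state \<open>s\<close> arises within a round that started with sellers \<open>R\<close> and
  evaluation count \<open>e\<close>, after the sellers in \<open>X\<close> have been processed.  The value bounds are
  only claimed for \<open>\<rho> > 0\<close>: for \<open>\<rho> = 0\<close> the price \<open>v(u | S)/(\<rho>/B)\<close> is \<open>0\<close> by division by zero.\<close>

definition round_inv :: "'a set \<Rightarrow> nat \<Rightarrow> 'a set \<Rightarrow> 'a bfm_state \<Rightarrow> bool" where
  "round_inv R e X s \<longleftrightarrow>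
    Rs s \<subseteq> R \<and> A1 s \<union> A2 s \<subseteq> Rs s \<and> A1 s \<inter> A2 s = {} \<and> A1 s \<union> A2 s \<subseteq> X \<and>
    v (A1 s) \<le> rho s \<and> v (A2 s) \<le> rho s \<and>
    (0 < rho s \<longrightarrow>
      (\<Sum>w\<in>A2 s. max 0 (marginal v w (A1 s))) \<le> v (A2 s) \<and>
      (\<Sum>w\<in>A1 s. max 0 (marginal v w (A2 s))) \<le> v (A1 s) \<and>
      (\<forall>w\<in>R - Rs s. marginal v w (A1 s) \<le> rho s * c w / B \<and>
                     marginal v w (A2 s) \<le> rho s * c w / B)) \<and>
    (\<forall>w\<in>Rs s. c w \<le> pr s w) \<and> evals s \<le> e + 4 * card X \<and>
    (ended s \<longrightarrow> (\<exists>w\<in>Rs s. rho s < v (insert w (A1 s)) \<or> rho s < v (insert w (A2 s)))) \<and>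
    (\<not> ended s \<longrightarrow> X \<inter> Rs s \<subseteq> P1 s \<union> P2 s \<union> A1 s \<union> A2 s)"

context
  fixes R e X s
  assumes inv: "round_inv R e X s"
begin

lemma round_inv_sets: "Rs s \<subseteq> R" "A1 s \<union> A2 s \<subseteq> Rs s" "A1 s \<inter> A2 s = {}"
  using inv unfolding round_inv_def by blast+

lemma round_inv_value: "v (A1 s) \<le> rho s" "v (A2 s) \<le> rho s"
  using inv unfolding round_inv_def by blast+

lemma round_inv_balanced:
  "0 < rho s \<Longrightarrow> (\<Sum>w\<in>A2 s. max 0 (marginal v w (A1 s))) \<le> v (A2 s)"
  "0 < rho s \<Longrightarrow> (\<Sum>w\<in>A1 s. max 0 (marginal v w (A2 s))) \<le> v (A1 s)"
  using inv unfolding round_inv_def by blast+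

lemma round_inv_rejected:
  "0 < rho s \<Longrightarrow> w \<in> R - Rs s \<Longrightarrow> marginal v w (A1 s) \<le> rho s * c w / B"
  "0 < rho s \<Longrightarrow> w \<in> R - Rs s \<Longrightarrow> marginal v w (A2 s) \<le> rho s * c w / B"
  using inv unfolding round_inv_def by blast+

lemma round_inv_prices: "w \<in> Rs s \<Longrightarrow> c w \<le> pr s w"
  and round_inv_evals: "evals s \<le> e + 4 * card X"
  using inv unfolding round_inv_def by blast+

lemma round_inv_ended:
  "ended s \<Longrightarrow> \<exists>w\<in>Rs s. rho s < v (insert w (A1 s)) \<or> rho s < v (insert w (A2 s))"
  and round_inv_not_ended: "\<not> ended s \<Longrightarrow> X \<inter> Rs s \<subseteq> P1 s \<union> P2 s \<union> A1 s \<union> A2 s"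
  using inv unfolding round_inv_def by blast+

end

lemma round_inv_proc:
  assumes inv: "round_inv R e X s" and X: "finite X" "u \<notin> X" and u: "u \<in> N" and R: "R \<subseteq> N"
  shows "round_inv R e (insert u X) (proc u s)"
proof (cases "ended s \<or> u \<notin> Rs s \<or> u \<in> P1 s \<or> u \<in> P2 s")
  case True
  then have "proc u s = s" by (auto simp: bfm_proc_def)
  then show ?thesis using inv True X unfolding round_inv_def by auto
next
  case False
  then have active: "\<not> ended s" "u \<in> Rs s" "u \<notin> P1 s" "u \<notin> P2 s" by auto
  note sets = round_inv_sets[OF inv]
  have fresh: "u \<notin> A1 s" "u \<notin> A2 s" using inv X(2) unfolding round_inv_def by blast+
  have AN: "A1 s \<union> A2 s \<subseteq> N" using sets R by blast
  have rejected_insert: "marginal v w (insert u S) \<le> rho s * c w / B"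
    if "w \<in> R - Rs s" "S \<subseteq> Rs s" "marginal v w S \<le> rho s * c w / B" for w S
    using marginal_antimono[of S "insert u S" w] that sets R u active(2) by force
  have price: "c u \<le> pr s u" using round_inv_prices[OF inv active(2)] .
  show ?thesis
    using active u price
  proof (cases rule: bfm_proc_cases)
    case (stop q)
    then show ?thesis using inv X active unfolding round_inv_def by auto
  next
    case (add1 q)
    have "(\<Sum>w\<in>A2 s. max 0 (marginal v w (insert u (A1 s)))) \<le> v (A2 s) \<and>
      (\<Sum>w\<in>insert u (A1 s). max 0 (marginal v w (A2 s))) \<le> v (insert u (A1 s))" if "0 < rho s"
      using balanced_insert[of "A1 s" "A2 s" u] AN u fresh sets(3) add1(4,5) that
        round_inv_balanced[OF inv that] by auto
    then show ?thesis using inv X active fresh add1(1-3) rejected_insert unfolding round_inv_def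
      by (simp add: Int_insert_left) blast
  next
    case (add2 q)
    have "(\<Sum>w\<in>A1 s. max 0 (marginal v w (insert u (A2 s)))) \<le> v (A1 s) \<and>
      (\<Sum>w\<in>insert u (A2 s). max 0 (marginal v w (A1 s))) \<le> v (insert u (A2 s))" if "0 < rho s"
      using balanced_insert[of "A2 s" "A1 s" u] AN u fresh sets(3) add2(4,5) that
        round_inv_balanced[OF inv that] by auto
    then show ?thesis using inv X active fresh add2(1-3) rejected_insert unfolding round_inv_def
      by (simp add: Int_insert_left) blast
  next
    case (reject q)
    then show ?thesis using inv X active fresh unfolding round_inv_def by auto
  qed
qed

lemma round_inv_value_bound:
  assumes inv: "round_inv R e X s" and R: "R \<subseteq> N" and pos: "0 < rho s"
    and Q: "Q \<subseteq> A1 s \<union> A2 s \<union> (R - Rs s)"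
  shows "v Q \<le> 2 * v (A1 s) + 2 * v (A2 s) + 2 * (rho s * (\<Sum>w\<in>Q \<inter> (R - Rs s). c w) / B)"
    and "Q \<inter> (A1 s \<union> A2 s) = {} \<Longrightarrow>
      v Q \<le> v (A1 s) + v (A2 s) + 2 * (rho s * (\<Sum>w\<in>Q \<inter> (R - Rs s). c w) / B)"
proof -
  note sets = round_inv_sets[OF inv]
  have "A1 s \<subseteq> N" "A2 s \<subseteq> N" using sets R by blast+
  then have fin: "finite (A1 s)" "finite (A2 s)" using finite_ground finite_subset by auto
  have cost: "(\<Sum>w\<in>Q \<inter> (R - Rs s). rho s * c w / B) = rho s * (\<Sum>w\<in>Q \<inter> (R - Rs s). c w) / B"
    by (simp add: sum_divide_distrib sum_distrib_left)
  have "v (Q \<union> A1 s) \<le> v (A1 s) + (\<Sum>w\<in>Q \<inter> A2 s. max 0 (marginal v w (A1 s)))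
      + (\<Sum>w\<in>Q \<inter> (R - Rs s). rho s * c w / B)"
    by (rule value_union_le) (use sets R Q round_inv_rejected(1)[OF inv pos] in auto)
  then have h1: "v (Q \<union> A1 s) \<le> v (A1 s) + (\<Sum>w\<in>Q \<inter> A2 s. max 0 (marginal v w (A1 s)))
      + rho s * (\<Sum>w\<in>Q \<inter> (R - Rs s). c w) / B"
    unfolding cost .
  have "v (Q \<union> A2 s) \<le> v (A2 s) + (\<Sum>w\<in>Q \<inter> A1 s. max 0 (marginal v w (A2 s)))
      + (\<Sum>w\<in>Q \<inter> (R - Rs s). rho s * c w / B)"
    by (rule value_union_le) (use sets R Q round_inv_rejected(2)[OF inv pos] in auto)
  then have h2: "v (Q \<union> A2 s) \<le> v (A2 s) + (\<Sum>w\<in>Q \<inter> A1 s. max 0 (marginal v w (A2 s)))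
      + rho s * (\<Sum>w\<in>Q \<inter> (R - Rs s). c w) / B"
    unfolding cost .
  have "(\<Sum>w\<in>Q \<inter> A2 s. max 0 (marginal v w (A1 s))) \<le> (\<Sum>w\<in>A2 s. max 0 (marginal v w (A1 s)))"
    "(\<Sum>w\<in>Q \<inter> A1 s. max 0 (marginal v w (A2 s))) \<le> (\<Sum>w\<in>A1 s. max 0 (marginal v w (A2 s)))"
    using fin by (auto intro!: sum_mono2)
  then have balanced: "(\<Sum>w\<in>Q \<inter> A2 s. max 0 (marginal v w (A1 s))) \<le> v (A2 s)"
      "(\<Sum>w\<in>Q \<inter> A1 s. max 0 (marginal v w (A2 s))) \<le> v (A1 s)"
    using round_inv_balanced[OF inv pos] by linarith+
  have pair: "v Q \<le> v (Q \<union> A1 s) + v (Q \<union> A2 s)"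
    using sets R Q by (intro le_union_disjoint_pair) blast+
  then show "v Q \<le> 2 * v (A1 s) + 2 * v (A2 s) + 2 * (rho s * (\<Sum>w\<in>Q \<inter> (R - Rs s). c w) / B)"
    using pair h1 h2 balanced by linarith
  assume "Q \<inter> (A1 s \<union> A2 s) = {}"
  then have "Q \<inter> A1 s = {}" "Q \<inter> A2 s = {}" by auto
  then show "v Q \<le> v (A1 s) + v (A2 s) + 2 * (rho s * (\<Sum>w\<in>Q \<inter> (R - Rs s). c w) / B)"
    using pair h1 h2 by simp
qed

lemma proc_fields:
  "P1 (proc u s) = P1 s" "P2 (proc u s) = P2 s" "rho (proc u s) = rho s"
  by (simp_all add: bfm_proc_def Let_def)

lemma fold_proc_fields:
  "P1 (fold proc ys s) = P1 s" "P2 (fold proc ys s) = P2 s" "rho (fold proc ys s) = rho s"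
  by (induction ys arbitrary: s) (simp_all add: proc_fields)

lemma round_inv_fold:
  assumes "round_inv R e X s" "finite X" "set ys \<inter> X = {}" "distinct ys" "set ys \<subseteq> N" "R \<subseteq> N"
  shows "round_inv R e (X \<union> set ys) (fold proc ys s)"
  using assms
proof (induction ys arbitrary: X s)
  case (Cons y ys)
  have "round_inv R e (insert y X) (proc y s)" using Cons.prems by (intro round_inv_proc) auto
  then have "round_inv R e (insert y X \<union> set ys) (fold proc ys (proc y s))"
    using Cons.prems by (intro Cons.IH) auto
  then show ?case by simp
qed simp

abbreviation "run_round \<equiv> bfm_round ord v c B al tie"

lemma run_round_fields: "P1 (run_round s) = A1 s" "P2 (run_round s) = A2 s" "rho (run_round s) = al * rho s"
  by (simp_all add: bfm_round_def fold_proc_fields bfm_start_def)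

lemma round_inv_run_round:
  assumes "Rs s \<subseteq> N" "\<forall>w\<in>Rs s. c w \<le> pr s w" "0 \<le> rho s"
  shows "round_inv (Rs s) (evals s) N (run_round s)"
proof -
  have "round_inv (Rs s) (evals s) {} (bfm_start al s)"
    using assms alpha_gt_1 unfolding round_inv_def bfm_start_def by (simp add: empty)
  then have "round_inv (Rs s) (evals s) ({} \<union> N) (fold proc ord (bfm_start al s))"
    using assms distinct_ord by (intro round_inv_fold) auto
  then show ?thesis by (simp add: bfm_round_def)
qed

section \<open>Runs of the mechanism\<close>

abbreviation "R0 \<equiv> bfm_R0 ord c B"
abbreviation "st \<equiv> bfm_state_at ord v c B al tie u0"
abbreviation "rho1 \<equiv> v {u0}"

lemma st_0: "st 0 = bfm_init ord v c B u0"
  and st_Suc: "st (Suc k) = run_round (st k)"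
  by (simp_all add: bfm_state_at_def)

lemma rho_st: "rho (st k) = al ^ k * rho1"
  by (induction k) (simp_all add: st_0 st_Suc bfm_init_def run_round_fields)

lemma R0_subset: "R0 \<subseteq> N"
  by (auto simp: bfm_R0_def)

lemma card_ground: "card N = length ord"
  using distinct_ord by (simp add: distinct_card)

lemma subset_R0_if_within_budget:
  assumes "Y \<subseteq> N" "(\<Sum>u\<in>Y. c u) \<le> B"
  shows "Y \<subseteq> R0"
proof
  fix u assume u: "u \<in> Y"
  have "c u \<le> (\<Sum>u\<in>Y. c u)"
    using u assms(1) cost_nonneg finite_subset[OF assms(1) finite_ground] by (intro member_le_sum) auto
  then show "u \<in> R0" using u assms by (auto simp: bfm_R0_def)
qed

context
  assumes R0_nonempty: "R0 \<noteq> {}"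
begin

lemma u0_in_R0: "u0 \<in> R0" and u0_max: "u \<in> R0 \<Longrightarrow> v {u} \<le> rho1"
  using valid_instance R0_nonempty unfolding bfm_instance_def by blast+

lemma rho1_nonneg: "0 \<le> rho1"
  using u0_in_R0 R0_subset nonneg by auto

lemma st_invariants:
  "Rs (st k) \<subseteq> R0 \<and> (\<forall>w\<in>Rs (st k). c w \<le> pr (st k) w) \<and>
    evals (st k) \<le> length ord + 4 * length ord * k"
proof (induction k)
  case 0
  then show ?case using u0_in_R0 by (simp add: st_0 bfm_init_def bfm_R0_def)
next
  case (Suc k)
  have "0 \<le> rho (st k)" using rho_st rho1_nonneg alpha_gt_1 by simp
  then have inv: "round_inv (Rs (st k)) (evals (st k)) N (st (Suc k))"
    unfolding st_Suc using Suc R0_subset by (intro round_inv_run_round) auto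
  show ?case
    using Suc round_inv_sets(1)[OF inv] round_inv_prices[OF inv] round_inv_evals[OF inv]
    by (auto simp: card_ground)
qed

lemma round_inv_st: "round_inv (Rs (st k)) (evals (st k)) N (st (Suc k))"
proof -
  have "0 \<le> rho (st k)" using rho_st rho1_nonneg alpha_gt_1 by simp
  then show ?thesis unfolding st_Suc using st_invariants R0_subset by (intro round_inv_run_round) auto
qed

lemma Rs_st_subset: "Rs (st k) \<subseteq> R0"
  using st_invariants by blast

lemma A_st_subset: "A1 (st (Suc k)) \<union> A2 (st (Suc k)) \<subseteq> Rs (st (Suc k))"
  using round_inv_sets(2)[OF round_inv_st] .

lemma done_if_not_ended: "\<not> ended (st (Suc k)) \<Longrightarrow> bfm_done (st (Suc k))"
  using round_inv_not_ended[OF round_inv_st] Rs_st_subset R0_subset unfolding bfm_done_def by blast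

lemma ended_witness:
  assumes "ended (st (Suc k))"
  obtains w T where "w \<in> R0" "T \<in> {A1 (st (Suc k)), A2 (st (Suc k))}" "rho (st (Suc k)) < v (insert w T)"
  using round_inv_ended[OF round_inv_st assms] Rs_st_subset by blast

lemma value_le_card_rho1:
  assumes "T \<subseteq> R0"
  shows "v T \<le> real (card T) * rho1"
proof -
  have "v T \<le> (\<Sum>u\<in>T. v {u})" using assms R0_subset by (intro le_sum_singletons) auto
  also have "\<dots> \<le> (\<Sum>u\<in>T. rho1)" using assms u0_max by (intro sum_mono) auto
  finally show ?thesis by simp
qed

lemma done_if_large:
  assumes "real (card N) \<le> al ^ Suc k"
  shows "bfm_done (st (Suc k))"
proof (rule ccontr)
  assume "\<not> bfm_done (st (Suc k))"
  then obtain w T where wT: "w \<in> R0" "T \<in> {A1 (st (Suc k)), A2 (st (Suc k))}"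
      "rho (st (Suc k)) < v (insert w T)"
    using done_if_not_ended ended_witness by metis
  have wT_R0: "insert w T \<subseteq> R0" using wT(1,2) A_st_subset Rs_st_subset by blast
  then have "card (insert w T) \<le> card N" using R0_subset by (intro card_mono) auto
  then have "real (card (insert w T)) * rho1 \<le> real (card N) * rho1"
    using rho1_nonneg by (intro mult_right_mono) auto
  then have "v (insert w T) \<le> real (card N) * rho1" using value_le_card_rho1[OF wT_R0] by linarith
  also have "\<dots> \<le> rho (st (Suc k))" using assms rho1_nonneg rho_st by (simp add: mult_right_mono)
  finally show False using wT(3) by simp
qed

lemma eventually_done: "\<exists>k\<ge>1. bfm_done (st k)"
proof -
  obtain k where "real (card N) < al ^ k" using real_arch_pow[OF alpha_gt_1] by blast
  moreover have "al ^ k \<le> al ^ Suc k" using alpha_gt_1 by (intro power_increasing) auto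
  ultimately have "real (card N) \<le> al ^ Suc k" by linarith
  then show ?thesis using done_if_large by (intro exI[of _ "Suc k"]) auto
qed

definition final_index :: nat where
  "final_index = (LEAST k. 1 \<le> k \<and> bfm_done (st k))"

lemma final_index_ge_1: "1 \<le> final_index"
  and final_index_done: "bfm_done (st final_index)"
  and not_done_before_final_index: "1 \<le> k \<Longrightarrow> k < final_index \<Longrightarrow> \<not> bfm_done (st k)"
  and final_index_le: "1 \<le> k \<Longrightarrow> bfm_done (st k) \<Longrightarrow> final_index \<le> k"
proof -
  obtain k0 where "1 \<le> k0 \<and> bfm_done (st k0)" using eventually_done by blast
  then show "1 \<le> final_index" "bfm_done (st final_index)"
    unfolding final_index_def by (metis (mono_tags, lifting) LeastI)+
  show "1 \<le> k \<Longrightarrow> k < final_index \<Longrightarrow> \<not> bfm_done (st k)"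
    unfolding final_index_def using not_less_Least by blast
  show "1 \<le> k \<Longrightarrow> bfm_done (st k) \<Longrightarrow> final_index \<le> k"
    unfolding final_index_def by (simp add: Least_le)
qed

lemma bfm_final_eq: "bfm_final ord v c B al tie u0 = st final_index"
  by (simp add: bfm_final_def final_index_def)

lemma A1_final_subset: "A1 (st final_index) \<subseteq> N"
proof -
  obtain k where "final_index = Suc k" using final_index_ge_1 not0_implies_Suc by fastforce
  then show ?thesis using A_st_subset[of k] Rs_st_subset[of "Suc k"] R0_subset by auto
qed

section \<open>Approximation guarantee\<close>

lemma rho_st_mono: "i \<le> k \<Longrightarrow> rho (st i) \<le> rho (st k)"
  using rho1_nonneg alpha_gt_1 by (simp add: rho_st mult_right_mono power_increasing)

definition rejected :: "nat \<Rightarrow> 'a set" where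
  "rejected j = Rs (st j) - Rs (st (Suc j))"

lemma rejected_before:
  assumes "u \<in> R0" "u \<notin> Rs (st k)"
  shows "\<exists>j<k. u \<in> rejected j"
  using assms(2)
proof (induction k)
  case 0
  then show ?case using assms(1) by (simp add: st_0 bfm_init_def)
next
  case (Suc k)
  show ?case
  proof (cases "u \<in> Rs (st k)")
    case True
    then have "u \<in> rejected k" using Suc.prems unfolding rejected_def by blast
    then show ?thesis by blast
  next
    case False
    then show ?thesis using Suc.IH less_SucI by blast
  qed
qed

lemma sum_rejected_costs:
  "(\<Sum>j<k. \<Sum>w\<in>Y \<inter> rejected j. c w) = (\<Sum>w\<in>Y \<inter> (R0 - Rs (st k)). c w)"
proof (induction k)
  case 0
  then show ?case by (simp add: st_0 bfm_init_def)
next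
  case (Suc k)
  have "Rs (st (Suc k)) \<subseteq> Rs (st k)" using round_inv_sets(1)[OF round_inv_st] .
  then have split: "Y \<inter> (R0 - Rs (st (Suc k))) = Y \<inter> (R0 - Rs (st k)) \<union> Y \<inter> rejected k"
    "Y \<inter> (R0 - Rs (st k)) \<inter> (Y \<inter> rejected k) = {}"
    using Rs_st_subset[of k] unfolding rejected_def by blast+
  have "finite (Y \<inter> R0)" using R0_subset finite_ground finite_subset by blast
  then have "finite (Y \<inter> (R0 - Rs (st k)))" "finite (Y \<inter> rejected k)"
    using Rs_st_subset[of k] unfolding rejected_def by (auto elim!: finite_subset[rotated])
  then have "(\<Sum>w\<in>Y \<inter> (R0 - Rs (st (Suc k))). c w)
      = (\<Sum>w\<in>Y \<inter> (R0 - Rs (st k)). c w) + (\<Sum>w\<in>Y \<inter> rejected k. c w)"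
    unfolding split(1) using split(2) by (intro sum.union_disjoint)
  then show ?case using Suc.IH by simp
qed

lemma round_value_bound:
  assumes pos: "0 < rho1" and j: "j < final_index"
  shows "v (Q \<inter> (A1 (st (Suc j)) \<union> A2 (st (Suc j)) \<union> rejected j))
      \<le> 2 * v (A1 (st (Suc j))) + 2 * v (A2 (st (Suc j)))
        + 2 * (rho (st final_index) * (\<Sum>w\<in>Q \<inter> rejected j. c w) / B)"
    and "v (Q \<inter> rejected j)
      \<le> 2 * rho (st (Suc j)) + 2 * (rho (st final_index) * (\<Sum>w\<in>Q \<inter> rejected j. c w) / B)"
proof -
  let ?s = "st (Suc j)"
  note inv = round_inv_st[of j]
  have R: "Rs (st j) \<subseteq> N" using Rs_st_subset R0_subset by blast
  have pos_s: "0 < rho ?s" using pos alpha_gt_1 by (simp add: rho_st)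
  have "0 \<le> (\<Sum>w\<in>Q \<inter> rejected j. c w)"
    using R cost_nonneg unfolding rejected_def by (intro sum_nonneg) auto
  then have cost: "rho ?s * (\<Sum>w\<in>Q \<inter> rejected j. c w) / B
      \<le> rho (st final_index) * (\<Sum>w\<in>Q \<inter> rejected j. c w) / B"
    using rho_st_mono[of "Suc j" final_index] j budget_pos
    by (intro divide_right_mono mult_right_mono) auto
  have rej: "Rs (st j) - Rs ?s = rejected j" by (simp add: rejected_def)
  note bound = round_inv_value_bound[OF inv R pos_s, unfolded rej]
  let ?Q = "Q \<inter> (A1 ?s \<union> A2 ?s \<union> rejected j)"
  have "?Q \<subseteq> A1 ?s \<union> A2 ?s \<union> rejected j" and eq: "?Q \<inter> rejected j = Q \<inter> rejected j" by blast+
  from bound(1)[OF this(1)]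
  have "v ?Q \<le> 2 * v (A1 ?s) + 2 * v (A2 ?s) + 2 * (rho ?s * (\<Sum>w\<in>Q \<inter> rejected j. c w) / B)"
    unfolding eq .
  then show "v ?Q \<le> 2 * v (A1 ?s) + 2 * v (A2 ?s)
      + 2 * (rho (st final_index) * (\<Sum>w\<in>Q \<inter> rejected j. c w) / B)"
    using cost by linarith
  have "Q \<inter> rejected j \<inter> (A1 ?s \<union> A2 ?s) = {}"
    using round_inv_sets(2)[OF inv] unfolding rejected_def by blast
  moreover have "Q \<inter> rejected j \<subseteq> A1 ?s \<union> A2 ?s \<union> rejected j"
    and eq': "Q \<inter> rejected j \<inter> rejected j = Q \<inter> rejected j" by blast+
  ultimately have "v (Q \<inter> rejected j)
      \<le> v (A1 ?s) + v (A2 ?s) + 2 * (rho ?s * (\<Sum>w\<in>Q \<inter> rejected j. c w) / B)"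
    using bound(2)[of "Q \<inter> rejected j"] unfolding eq' by blast
  then show "v (Q \<inter> rejected j)
      \<le> 2 * rho ?s + 2 * (rho (st final_index) * (\<Sum>w\<in>Q \<inter> rejected j. c w) / B)"
    using round_inv_value[OF inv] cost by linarith
qed

context
  fixes Y :: "'a set" and X :: real
  assumes rho1_pos: "0 < rho1" and Y_ground: "Y \<subseteq> N" and Y_budget: "(\<Sum>u\<in>Y. c u) \<le> B"
    and X_bounds: "v (P1 (st final_index)) \<le> X" "v (P2 (st final_index)) \<le> X"
      "v (A1 (st final_index)) \<le> X" "v (A2 (st final_index)) \<le> X"
begin

definition round_charge :: "nat \<Rightarrow> real" where
  "round_charge j = rho (st final_index) * (\<Sum>w\<in>Y \<inter> rejected j. c w) / B"

lemma feasible_set_covered: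
  "Y \<subseteq> P1 (st final_index) \<union> P2 (st final_index) \<union> A1 (st final_index) \<union> A2 (st final_index)
     \<union> (\<Union>j<final_index. rejected j)"
proof
  fix u assume "u \<in> Y"
  then have "u \<in> R0" using subset_R0_if_within_budget[OF Y_ground Y_budget] by blast
  then show "u \<in> P1 (st final_index) \<union> P2 (st final_index) \<union> A1 (st final_index)
      \<union> A2 (st final_index) \<union> (\<Union>j<final_index. rejected j)"
    using final_index_done rejected_before[of u final_index] unfolding bfm_done_def by blast
qed

lemma sum_round_charge_le: "(\<Sum>j<final_index. round_charge j) \<le> rho (st final_index)"
proof -
  have "(\<Sum>j<final_index. \<Sum>w\<in>Y \<inter> rejected j. c w) = (\<Sum>w\<in>Y \<inter> (R0 - Rs (st final_index)). c w)"
    by (rule sum_rejected_costs)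
  also have "\<dots> \<le> (\<Sum>w\<in>Y. c w)"
    using Y_ground cost_nonneg finite_subset[OF Y_ground finite_ground] by (intro sum_mono2) auto
  finally have "(\<Sum>j<final_index. \<Sum>w\<in>Y \<inter> rejected j. c w) \<le> B" using Y_budget by linarith
  moreover have "0 \<le> rho (st final_index)" using rho1_pos alpha_gt_1 by (simp add: rho_st)
  ultimately have "rho (st final_index) * (\<Sum>j<final_index. \<Sum>w\<in>Y \<inter> rejected j. c w)
      \<le> rho (st final_index) * B"
    by (intro mult_left_mono)
  then show ?thesis
    using budget_pos by (simp add: round_charge_def divide_le_eq sum_distrib_left flip: sum_divide_distrib)
qed

lemma X_nonneg: "0 \<le> X"
  using nonneg[OF A1_final_subset] X_bounds(3) by linarith

lemma value_le_if_one_round: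
  assumes K: "final_index = 1"
  shows "v Y \<le> (5 + 2 * al) * X"
proof -
  have P: "P1 (st 1) = {u0}" "P2 (st 1) = {}"
    by (simp_all add: st_Suc[of 0, simplified] st_0 run_round_fields bfm_init_def)
  define Q where "Q = Y \<inter> (A1 (st 1) \<union> A2 (st 1) \<union> rejected 0)"
  have "Y \<subseteq> {u0} \<union> A1 (st 1) \<union> A2 (st 1) \<union> rejected 0"
    using feasible_set_covered P unfolding K by (simp add: lessThan_Suc)
  then have "Y = Q \<union> (Y \<inter> {u0})" unfolding Q_def by blast
  then have "v Y \<le> v Q + v (Y \<inter> {u0})" using subadditive[of Q "Y \<inter> {u0}"] Y_ground by auto
  moreover have "v Q \<le> 2 * v (A1 (st 1)) + 2 * v (A2 (st 1)) + 2 * round_charge 0"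
    using round_value_bound(1)[OF rho1_pos, of 0 Y] K unfolding Q_def round_charge_def by simp
  moreover have "round_charge 0 \<le> al * X"
  proof -
    have "al * rho1 \<le> al * X" using X_bounds(1) alpha_gt_1 unfolding K P by simp
    then show ?thesis using sum_round_charge_le unfolding K by (simp add: rho_st)
  qed
  moreover have "v (Y \<inter> {u0}) \<le> X"
    using X_bounds(1) X_nonneg empty unfolding K P by (cases "u0 \<in> Y") auto
  moreover have "(5 + 2 * al) * X = 5 * X + 2 * (al * X)" by (simp add: algebra_simps)
  ultimately show ?thesis using X_bounds(3,4) unfolding K by linarith
qed

text \<open>Sellers of \<open>Y\<close> that survive lie in the sets of the last two rounds; every other one is
  charged to the round that rejected it.\<close>

lemma value_le_if_several_rounds:
  assumes K: "final_index = Suc (Suc m)"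
  shows "v Y \<le> 8 * X + 2 * (\<Sum>j<m. rho (st (Suc j))) + 2 * rho (st final_index)"
proof -
  let ?sK = "st (Suc (Suc m))" and ?s1 = "st (Suc m)"
  have P: "P1 ?sK = A1 ?s1" "P2 ?sK = A2 ?s1" by (simp_all only: st_Suc[of "Suc m"] run_round_fields)
  define QK where "QK = Y \<inter> (A1 ?sK \<union> A2 ?sK \<union> rejected (Suc m))"
  define QK1 where "QK1 = Y \<inter> (A1 ?s1 \<union> A2 ?s1 \<union> rejected m)"
  define F where "F = (\<Union>j<m. Y \<inter> rejected j)"
  have "Y \<subseteq> A1 ?s1 \<union> A2 ?s1 \<union> A1 ?sK \<union> A2 ?sK \<union> (\<Union>j<Suc (Suc m). rejected j)"
    using feasible_set_covered unfolding K P .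
  then have "Y = (QK \<union> QK1) \<union> F" unfolding QK_def QK1_def F_def lessThan_Suc by blast
  moreover have "QK \<subseteq> N" "QK1 \<subseteq> N" "F \<subseteq> N" using Y_ground unfolding QK_def QK1_def F_def by blast+
  ultimately have "v Y \<le> v QK + v QK1 + v F" using subadditive by (metis Un_subset_iff add_right_mono order_trans)
  moreover have "v F \<le> (\<Sum>j<m. v (Y \<inter> rejected j))"
    unfolding F_def using Y_ground by (intro subadditive_UN) auto
  moreover have "v QK \<le> 4 * X + 2 * round_charge (Suc m)"
    using round_value_bound(1)[OF rho1_pos, of "Suc m" Y] X_bounds(3,4) K
    unfolding QK_def round_charge_def by simp
  moreover have "v QK1 \<le> 4 * X + 2 * round_charge m"
    using round_value_bound(1)[OF rho1_pos, of m Y] X_bounds(1,2)[unfolded K P] K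
    unfolding QK1_def round_charge_def by simp
  moreover have "(\<Sum>j<m. v (Y \<inter> rejected j))
      \<le> (\<Sum>j<m. 2 * rho (st (Suc j)) + 2 * round_charge j)"
    using round_value_bound(2)[OF rho1_pos, of _ Y] K unfolding round_charge_def
    by (intro sum_mono) simp
  moreover have "(\<Sum>j<m. 2 * rho (st (Suc j)) + 2 * round_charge j)
      = 2 * (\<Sum>j<m. rho (st (Suc j))) + 2 * (\<Sum>j<m. round_charge j)"
    by (simp add: sum.distrib sum_distrib_left)
  moreover have "(\<Sum>j<m. round_charge j) + round_charge m + round_charge (Suc m) \<le> rho (st final_index)"
    using sum_round_charge_le unfolding K by simp
  ultimately show ?thesis by linarith
qed

lemma penultimate_rho_less:
  assumes K: "final_index = Suc (Suc m)"
  shows "rho (st (Suc m)) < rho1 + X"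
proof -
  have "\<not> bfm_done (st (Suc m))" using not_done_before_final_index[of "Suc m"] K by simp
  then have "ended (st (Suc m))" using done_if_not_ended by blast
  then obtain w T where wT: "w \<in> R0" "T \<in> {A1 (st (Suc m)), A2 (st (Suc m))}"
      "rho (st (Suc m)) < v (insert w T)"
    by (rule ended_witness)
  have "v T \<le> X"
    using wT(2) X_bounds(1,2) unfolding K by (auto simp only: st_Suc[of "Suc m"] run_round_fields)
  moreover have "T \<subseteq> N" using wT(2) A_st_subset[of m] Rs_st_subset R0_subset by blast
  then have "v (insert w T) \<le> v {w} + v T" using subadditive[of "{w}" T] wT(1) R0_subset by auto
  moreover have "v {w} \<le> rho1" using u0_max wT(1) by blast
  ultimately show ?thesis using wT(3) by linarith
qed

lemma approximation:
  assumes alpha: "al = 1 + sqrt 3"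
  shows "v Y \<le> (12 + 4 * sqrt 3) * X"
proof -
  obtain J where K: "final_index = Suc J" using final_index_ge_1 not0_implies_Suc by fastforce
  show ?thesis
  proof (cases J)
    case 0
    then have "v Y \<le> (7 + 2 * sqrt 3) * X" using value_le_if_one_round K alpha by simp
    also have "\<dots> \<le> (12 + 4 * sqrt 3) * X" using X_nonneg by (intro mult_right_mono) auto
    finally show ?thesis .
  next
    case (Suc m)
    let ?S = "\<Sum>j<m. rho (st (Suc j))" and ?r = "rho (st (Suc m))"
    have "(al - 1) * ?S = al * rho1 * ((al - 1) * (\<Sum>j<m. al ^ j))"
      by (simp add: rho_st sum_distrib_left sum_distrib_right algebra_simps)
    also have "\<dots> = al * rho1 * (al ^ m - 1)" by (simp only: power_diff_1_eq)
    also have "\<dots> = ?r - al * rho1" by (simp add: rho_st algebra_simps)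
    finally have "sqrt 3 * ?S \<le> ?r" using alpha rho1_nonneg alpha_gt_1 by simp
    moreover have "al * rho1 \<le> ?r"
      using rho_st_mono[of "Suc 0" "Suc m"] rho_st[of "Suc 0"] by simp
    moreover have "rho (st final_index) = al * ?r" using K Suc by (simp add: rho_st)
    ultimately show ?thesis
      using value_le_if_several_rounds[of m] penultimate_rho_less[of m]
        sqrt3_tradeoff[of ?S ?r rho1 X] X_nonneg K Suc unfolding alpha by simp
  qed
qed

end

end

lemma terminates: "bfm_terminates ord v c B al tie u0"
  using eventually_done unfolding bfm_terminates_def by blast

lemma output_guarantee:
  assumes alpha: "al = 1 + sqrt 3"
    and A: "A \<in> bfm_candidates ord v c B al tie u0"
    and A_max: "\<forall>A'\<in>bfm_candidates ord v c B al tie u0. v A' \<le> v A"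
    and Y: "Y \<subseteq> N" "(\<Sum>u\<in>Y. c u) \<le> B"
  shows "v Y \<le> (12 + 4 * sqrt 3) * v A"
proof (cases "R0 = {}")
  case True
  then have "A = {}" "Y = {}" using A subset_R0_if_within_budget[OF Y] by (auto simp: bfm_candidates_def)
  then show ?thesis by (simp add: empty)
next
  case R0: False
  have "bfm_candidates ord v c B al tie u0
      = {P1 (st final_index), P2 (st final_index), A1 (st final_index), A2 (st final_index)}"
    using R0 by (simp add: bfm_candidates_def bfm_final_eq Let_def)
  then have bounds: "v (P1 (st final_index)) \<le> v A" "v (P2 (st final_index)) \<le> v A"
      "v (A1 (st final_index)) \<le> v A" "v (A2 (st final_index)) \<le> v A"
    using A_max by auto
  show ?thesis
  proof (cases "0 < rho1")
    case True
    show ?thesis by (rule approximation[OF R0 True Y bounds alpha])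
  next
    case False
    then have "rho1 = 0" using rho1_nonneg[OF R0] by simp
    then have "v Y \<le> 0" using value_le_card_rho1[OF R0 subset_R0_if_within_budget[OF Y]] by simp
    moreover have "0 \<le> v A" using bounds(3) nonneg[OF A1_final_subset[OF R0]] by linarith
    then have "0 \<le> (12 + 4 * sqrt 3) * v A" by simp
    ultimately show ?thesis by linarith
  qed
qed

section \<open>Running time\<close>

lemma final_index_le_log:
  assumes R0: "R0 \<noteq> {}" and alpha: "2 \<le> al" and n: "2 \<le> length ord"
  shows "real final_index \<le> log 2 (length ord) + 1"
proof -
  define L where "L = log 2 (length ord)"
  define k where "k = nat \<lceil>L\<rceil>"
  have "1 \<le> L" unfolding L_def using n by (subst le_log_iff) auto
  then have k: "L \<le> real k" "real k \<le> L + 1" "1 \<le> k" unfolding k_def by linarith+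
  have "real (card N) = 2 powr L" unfolding L_def card_ground using n by (intro powr_log_cancel[symmetric]) auto
  also have "\<dots> \<le> 2 powr real k" using k(1) by (intro powr_mono) auto
  also have "\<dots> = 2 ^ k" by (simp add: powr_realpow)
  also have "\<dots> \<le> al ^ k" using alpha by (intro power_mono) auto
  finally have "real (card N) \<le> al ^ k" .
  moreover obtain k' where "k = Suc k'" using k(3) not0_implies_Suc by fastforce
  ultimately have "bfm_done (st k)" using done_if_large[OF R0] by simp
  then have "final_index \<le> k" using final_index_le[OF R0] k(3) by blast
  then show ?thesis using k(2) unfolding L_def by linarith
qed

lemma num_evals_le:
  assumes alpha: "2 \<le> al" and n: "2 \<le> length ord"
  shows "real (bfm_num_evals ord v c B al tie u0)
    \<le> 11 / ln 2 * real (length ord) * ln (real (length ord))"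
proof -
  define n where "n = real (length ord)"
  define L where "L = log 2 n"
  have "1 \<le> L" unfolding L_def n_def using n by (subst le_log_iff) auto
  then have nL: "n \<le> n * L" unfolding n_def by (simp add: mult_le_cancel_left1)
  have "real (bfm_num_evals ord v c B al tie u0) \<le> n + 4 * n * (L + 1) + 4"
  proof (cases "R0 = {}")
    case True
    then show ?thesis using \<open>1 \<le> L\<close> by (simp add: bfm_num_evals_def n_def)
  next
    case R0: False
    have "evals (st final_index) \<le> length ord + 4 * length ord * final_index"
      using st_invariants[OF R0] by blast
    then have "real (evals (st final_index)) \<le> real (length ord + 4 * length ord * final_index)"
      by (rule of_nat_mono)
    also have "\<dots> = n + 4 * n * real final_index" unfolding n_def by simp
    finally have "real (evals (st final_index)) \<le> n + 4 * n * real final_index" .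
    moreover have "4 * n * real final_index \<le> 4 * n * (L + 1)"
      using final_index_le_log[OF R0 alpha n] unfolding L_def n_def by (intro mult_left_mono) auto
    ultimately show ?thesis using R0 by (simp add: bfm_num_evals_def bfm_final_eq)
  qed
  also have "\<dots> \<le> 11 * n * L" using nL n unfolding n_def by (simp add: algebra_simps)
  also have "\<dots> = 11 / ln 2 * n * ln n" unfolding L_def by (simp add: log_def)
  finally show ?thesis unfolding n_def .
qed

end

theorem theorem5p4:
  shows "(\<forall>(ord :: 'a list) v c B tie u0. bfm_instance ord v c B u0 \<longrightarrow>
            bfm_terminates ord v c B (1 + sqrt 3) tie u0 \<and>
            (\<forall>A \<in> bfm_candidates ord v c B (1 + sqrt 3) tie u0.
               (\<forall>A' \<in> bfm_candidates ord v c B (1 + sqrt 3) tie u0. v A' \<le> v A) \<longrightarrow>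
               (\<forall>Opt \<subseteq> set ord. (\<Sum>u\<in>Opt. c u) \<le> B \<longrightarrow> v Opt \<le> (12 + 4 * sqrt 3) * v A)))
       \<and> (\<exists>C::real. \<forall>(ord :: 'a list) v c B tie u0.
            bfm_instance ord v c B u0 \<and> 2 \<le> length ord \<longrightarrow>
            real (bfm_num_evals ord v c B (1 + sqrt 3) tie u0)
              \<le> C * real (length ord) * ln (real (length ord)))"
proof -
  have run: "bfm_run ord v c B u0 (1 + sqrt 3)" if "bfm_instance ord v c B u0"
    for ord :: "'a list" and v c B u0
    using that by unfold_locales auto
  have "2 \<le> 1 + sqrt (3::real)" by simp
  then show ?thesis
    using bfm_run.terminates[OF run] bfm_run.output_guarantee[OF run]
      bfm_run.num_evals_le[OF run \<open>2 \<le> 1 + sqrt 3\<close>]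
    by (intro conjI exI[of _ "11 / ln 2"]) blast+
qed

end
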